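(* Let $D$ be a square-free integer, $p$ an odd prime, $k,\ell$ positive integers and $c_D$ a positive integer with $\gcd(c_D k, p) = 1$. Let $N = c_D k p^{\ell} - 1$ be an odd integer with Jacobi symbol $\left(\frac{D}{N}\right) = -1$, and let $w \in \mathcal{G}_N(D)$. Suppose there exists an integer $j$ with $1 \le j \le \ell$ such that: (i) $\Phi_p(w^{c_D k p^{j-1}}) \equiv 0 \pmod{N}$, where $\Phi_p$ is the $p$-th cyclotomic polynomial, and (ii) $2j \ge \log_p(c_D k) + \ell$. Then $N$ is prime.
   Context: For an integer $n \ge 2$ and a square-free integer $D$: if $D \equiv 2,3 \pmod 4$, let $\mathcal{I}_n(D) = \{a + b\sqrt{D} : a,b \in \mathbb{Z}/n\mathbb{Z}\}$ (the ring $\mathbb{Z}[\sqrt D]/n\mathbb{Z}[\sqrt D]$) and $\mathcal{G}_n(D) = \{a + b\sqrt{D} \in \mathcal{I}_n(D) : a^2 - Db^2 \equiv 1 \pmod n\}$; if $D \equiv 1 \pmod 4$, let $\omega = \frac{1+\sqrt D}{2}$, $\mathcal{I}_n(D) = \{a + b\omega : a,b \in \mathbb{Z}/n\mathbb{Z}\}$ (the ring $\mathbb{Z}[\omega]/n\mathbb{Z}[\omega]$) and $\mathcal{G}_n(D) = \{a + b\omega \in \mathcal{I}_n(D) : a^2 + ab + \frac{1-D}{4} b^2 \equiv 1 \pmod n\}$. Powers are computed in $\mathcal{I}_n(D)$, a congruence $x \equiv y \pmod n$ for $x,y \in \mathcal{I}_n(D)$ means equality in $\mathcal{I}_n(D)$,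 and polynomials are evaluated in $\mathcal{I}_n(D)$. *)

theory Defs
  imports "HOL-Number_Theory.Number_Theory" "HOL-Computational_Algebra.Squarefree"
begin

definition jacobi :: "int \<Rightarrow> nat \<Rightarrow> int" where
  "jacobi a n = (\<Prod>q\<in>prime_factors n. Legendre a (int q) ^ multiplicity q n)"

(* Elements of I_n(D) are pairs (a,b) of residues in {0..<n}:
   a + b sqrt D  if D = 2,3 mod 4,   a + b omega  (omega = (1+sqrt D)/2) if D = 1 mod 4. *)
definition qmul :: "int \<Rightarrow> int \<Rightarrow> int \<times> int \<Rightarrow> int \<times> int \<Rightarrow> int \<times> int" where
  "qmul n D x y = (case x of (a, b) \<Rightarrow> case y of (c, d) \<Rightarrow>
     if D mod 4 = 1
     then ((a * c + b * d * ((D - 1) div 4)) mod n, (a * d + b * c + b * d) mod n)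
     else ((a * c + D * b * d) mod n, (a * d + b * c) mod n))"

definition qadd :: "int \<Rightarrow> int \<times> int \<Rightarrow> int \<times> int \<Rightarrow> int \<times> int" where
  "qadd n x y = ((fst x + fst y) mod n, (snd x + snd y) mod n)"

definition qone :: "int \<Rightarrow> int \<times> int" where
  "qone n = (1 mod n, 0)"

definition qzero :: "int \<times> int" where
  "qzero = (0, 0)"

definition qpow :: "int \<Rightarrow> int \<Rightarrow> int \<times> int \<Rightarrow> nat \<Rightarrow> int \<times> int" where
  "qpow n D x k = (qmul n D x ^^ k) (qone n)"

definition qnorm :: "int \<Rightarrow> int \<times> int \<Rightarrow> int" where
  "qnorm D x = (case x of (a, b) \<Rightarrow>
     if D mod 4 = 1 then a^2 + a * b + ((1 - D) div 4) * b^2 else a^2 - D * b^2)"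

definition G :: "int \<Rightarrow> int \<Rightarrow> (int \<times> int) set" where
  "G n D = {(a, b). 0 \<le> a \<and> a < n \<and> 0 \<le> b \<and> b < n \<and> [qnorm D (a, b) = 1] (mod n)}"

(* The p-th cyclotomic polynomial for prime p is Phi_p(X) = 1 + X + ... + X^(p-1);
   evaluation of Phi_p at x in I_n(D). *)
definition cyclo_prime_eval :: "int \<Rightarrow> int \<Rightarrow> nat \<Rightarrow> int \<times> int \<Rightarrow> int \<times> int" where
  "cyclo_prime_eval n D p x = foldr (\<lambda>i acc. qadd n (qpow n D x i) acc) [0..<p] qzero"

end

theory Submission
  imports Defs "HOL-Computational_Algebra.Polynomial"
begin

(*
  Represent a + b sqrt D (resp. a + b omega) by the polynomial a + bX, so that I_N(D) becomes
  Z[X]/(N, X^2 - tX + n) with t, n the trace and norm of the generator.  Let q be a prime factor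
  of N.  Frobenius and Euler's criterion for the discriminant t^2 - 4n show that every z of norm 1
  satisfies z^e = 1 modulo (q, X^2 - tX + n) for some e in {q - 1, q + 1, 2q}.  Condition (i)
  makes y = w^(ckp^(j-1)) a root of Phi_p with y /= 1 modulo q, so p^j divides e; since p^j does not
  divide 2q, q = +-1 mod p^j.  Then every divisor of N is +-1 mod p^j, and a factorization
  N = ab with a, b > 1 and ab = -1 mod p^j forces ab >= (p^j + 1)(2p^j - 1) > p^(2j), whereas
  condition (ii) gives N + 1 <= p^(2j).
*)

(* Congruence modulo the ideal generated by u and v.  The moduli come first so that "\<dots>" in a
   calculation refers to the right-hand side of the congruence. *)
definition cong2 :: "'a::comm_ring_1 \<Rightarrow> 'a \<Rightarrow> 'a \<Rightarrow> 'a \<Rightarrow> bool"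
  where "cong2 u v x y \<longleftrightarrow> (\<exists>a b. x - y = u * a + v * b)"

abbreviation cong2_mod :: "'a::comm_ring_1 \<Rightarrow> 'a \<Rightarrow> 'a \<Rightarrow> 'a \<Rightarrow> bool"
    (\<open>(\<open>indent=1 notation=\<open>mixfix cong2\<close>\<close>[_ = _] '(' mod _,/ _'))\<close>)
  where "[x = y] (mod u, v) \<equiv> cong2 u v x y"

lemma cong2I: "x - y = u * a + v * b \<Longrightarrow> [x = y] (mod u, v)"
  unfolding cong2_def by blast

lemma cong2_refl [simp]: "[x = x] (mod u, v)"
  using cong2I[of x x u 0 v 0] by simp

lemma cong2_sym: "[x = y] (mod u, v) \<Longrightarrow> [y = x] (mod u, v)"
proof (unfold cong2_def, elim exE)
  fix a b assume "x - y = u * a + v * b"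
  then have "y - x = u * - a + v * - b" by (simp add: algebra_simps)
  then show "\<exists>a b. y - x = u * a + v * b" by blast
qed

lemma cong2_add:
  "[x = y] (mod u, v) \<Longrightarrow> [x' = y'] (mod u, v) \<Longrightarrow> [x + x' = y + y'] (mod u, v)"
proof (unfold cong2_def, elim exE)
  fix a b a' b' assume "x - y = u * a + v * b" "x' - y' = u * a' + v * b'"
  then have "x + x' - (y + y') = u * (a + a') + v * (b + b')" by (simp add: algebra_simps)
  then show "\<exists>a b. x + x' - (y + y') = u * a + v * b" by blast
qed

lemma cong2_trans [trans]: "[x = y] (mod u, v) \<Longrightarrow> [y = z] (mod u, v) \<Longrightarrow> [x = z] (mod u, v)"
  using cong2_add[of u v x y y z] by (simp add: cong2_def)

lemma cong2_mult:
  "[x = y] (mod u, v) \<Longrightarrow> [x' = y'] (mod u, v) \<Longrightarrow> [x * x' = y * y'] (mod u, v)"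
proof (unfold cong2_def, elim exE)
  fix a b a' b' assume "x - y = u * a + v * b" "x' - y' = u * a' + v * b'"
  then have "x * x' - y * y' = u * (a * x' + y * a') + v * (b * x' + y * b')"
    by (simp add: algebra_simps flip: right_diff_distrib left_diff_distrib)
  then show "\<exists>a b. x * x' - y * y' = u * a + v * b" by blast
qed

lemma cong2_pow: "[x = y] (mod u, v) \<Longrightarrow> [x ^ k = y ^ k] (mod u, v)"
  by (induction k) (simp_all add: cong2_mult)

lemma cong2_sum:
  "(\<And>i. i \<in> A \<Longrightarrow> [f i = g i] (mod u, v)) \<Longrightarrow> [sum f A = sum g A] (mod u, v)"
  by (induction A rule: infinite_finite_induct) (simp_all add: cong2_add)

lemma cong2_dvd_modulus:
  assumes "[x = y] (mod u, v)" and "u' dvd u"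
  shows "[x = y] (mod u', v)"
proof -
  obtain a b where "x - y = u * a + v * b"
    using assms(1) unfolding cong2_def by blast
  moreover obtain c where "u = u' * c"
    using assms(2) ..
  ultimately have "x - y = u' * (c * a) + v * b"
    by (simp add: mult.assoc)
  then show ?thesis
    by (rule cong2I)
qed

lemma cong2_mult_self: "[u * a = 0] (mod u, v)"
  using cong2I[of "u * a" 0 u a v 0] by simp

lemma cong2_of_int:
  assumes "[a = b] (mod int n)"
  shows "[of_int a = of_int b] (mod of_nat n, v)"
proof -
  obtain c where "a - b = int n * c"
    using assms unfolding cong_iff_dvd_diff ..
  then have "of_int a - of_int b = of_nat n * of_int c + v * 0"
    by (metis add_0_right mult_zero_right of_int_diff of_int_mult of_int_of_nat_eq)
  then show ?thesis
    by (rule cong2I)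
qed

lemma cong2_mult_cancel_of_int:
  assumes "coprime k (int n)" and "[of_int k * x = of_int k * y] (mod of_nat n, v)"
  shows "[x = y] (mod of_nat n, v)"
proof -
  obtain a b where "a * k + b * int n = 1"
    using assms(1) bezout_int[of k "int n"] by (auto simp: coprime_iff_gcd_eq_1)
  then have one: "of_int a * of_int k + of_nat n * of_int b = (1 :: 'a)"
    by (metis of_int_1 of_int_add of_int_mult of_int_of_nat_eq mult.commute)
  have "x = (of_int a * of_int k + of_nat n * of_int b) * x"
    by (simp add: one)
  also have "\<dots> = of_int a * (of_int k * x) + of_nat n * (of_int b * x)"
    by (simp add: algebra_simps)
  also have "[\<dots> = of_int a * (of_int k * y) + of_nat n * (of_int b * y)] (mod of_nat n, v)"
  proof (rule cong2_add)
    show "[of_int a * (of_int k * x) = of_int a * (of_int k * y)] (mod of_nat n, v)"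
      using assms(2) by (rule cong2_mult[OF cong2_refl])
    have "[of_nat n * (of_int b * x) = 0] (mod of_nat n, v)"
      by (rule cong2_mult_self)
    also have "[0 = of_nat n * (of_int b * y)] (mod of_nat n, v)"
      by (rule cong2_sym, rule cong2_mult_self)
    finally show "[of_nat n * (of_int b * x) = of_nat n * (of_int b * y)] (mod of_nat n, v)" .
  qed
  also have "\<dots> = (of_int a * of_int k + of_nat n * of_int b) * y"
    by (simp add: algebra_simps)
  also have "\<dots> = y"
    by (simp add: one)
  finally show ?thesis .
qed

lemma cong2_frobenius:
  assumes "prime q"
  shows "[(x + y) ^ q = x ^ q + y ^ q] (mod of_nat q, v)"
proof -
  define T where "T k = of_nat (q choose k) * x ^ k * y ^ (q - k)" for k
  have "q > 0"
    using assms by (rule prime_gt_0_nat)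
  have "[T k = 0] (mod of_nat q, v)" if "k \<in> {0<..<q}" for k
  proof -
    have "q dvd q choose k"
      using that assms by (intro dvd_choose_prime) auto
    then obtain r where "q choose k = q * r" ..
    then have "T k = of_nat q * (of_nat r * x ^ k * y ^ (q - k))"
      by (simp add: T_def mult.assoc)
    then show ?thesis
      by (simp add: cong2_mult_self)
  qed
  then have middle: "[(\<Sum>k\<in>{0<..<q}. T k) = 0] (mod of_nat q, v)"
    using cong2_sum[of "{0<..<q}" "of_nat q" v T "\<lambda>_. 0"] by simp
  have "{..q} = insert q (insert 0 {0<..<q})"
    using \<open>q > 0\<close> by auto
  then have "(x + y) ^ q = T q + (T 0 + (\<Sum>k\<in>{0<..<q}. T k))"
    using \<open>q > 0\<close> by (simp add: binomial_ring T_def)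
  also have "\<dots> = x ^ q + y ^ q + (\<Sum>k\<in>{0<..<q}. T k)"
    by (simp add: T_def add.commute)
  also have "[\<dots> = x ^ q + y ^ q + 0] (mod of_nat q, v)"
    using middle by (rule cong2_add[OF cong2_refl])
  finally show ?thesis
    by simp
qed

lemma cong2_pow_gcd:
  assumes "[z ^ a = 1] (mod u, v)" and "[z ^ b = 1] (mod u, v)" and "a \<noteq> 0"
  shows "[z ^ gcd a b = 1] (mod u, v)"
proof -
  obtain x y where xy: "a * x = b * y + gcd a b"
    using bezout_nat[OF assms(3)] by blast
  have "[z ^ gcd a b = (z ^ b) ^ y * z ^ gcd a b] (mod u, v)"
    using cong2_mult[OF cong2_pow[OF assms(2), of y] cong2_refl, of "z ^ gcd a b"]
    by (simp add: cong2_sym)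
  also have "(z ^ b) ^ y * z ^ gcd a b = (z ^ a) ^ x"
    by (simp add: xy power_add flip: power_mult)
  also have "[\<dots> = 1] (mod u, v)"
    using cong2_pow[OF assms(1), of x] by simp
  finally show ?thesis .
qed

lemma cong2_pow_eq_1_dvd:
  assumes "[z ^ a = 1] (mod u, v)" and "a dvd b"
  shows "[z ^ b = 1] (mod u, v)"
proof -
  obtain c where "b = a * c"
    using assms(2) ..
  then show ?thesis
    using cong2_pow[OF assms(1), of c] by (simp add: power_mult)
qed

lemma cong2_prime_power_dvd_exponent:
  assumes "prime p"
    and "[z ^ (s * p ^ j) = 1] (mod u, v)" and "\<not> [z ^ (s * p ^ (j - 1)) = 1] (mod u, v)"
    and "[z ^ e = 1] (mod u, v)"
  shows "p ^ j dvd e"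
proof (rule ccontr)
  assume "\<not> p ^ j dvd e"
  obtain i where "i \<le> j" and i: "gcd (p ^ j) e = p ^ i"
    using divides_primepow_nat[OF assms(1), of "gcd (p ^ j) e" j] by auto
  moreover have "i \<noteq> j"
    using i \<open>\<not> p ^ j dvd e\<close> gcd_dvd2[of "p ^ j" e] by auto
  ultimately have "gcd (p ^ j) e dvd p ^ (j - 1)"
    by (simp add: le_imp_power_dvd)
  have "gcd (s * p ^ j) e dvd gcd (s * p ^ j) (s * e)"
    by (simp add: gcd_greatest)
  also have "\<dots> = s * gcd (p ^ j) e"
    by (simp add: gcd_mult_left)
  also have "\<dots> dvd s * p ^ (j - 1)"
    using \<open>gcd (p ^ j) e dvd p ^ (j - 1)\<close> by (rule mult_dvd_mono[OF dvd_refl])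
  finally have "gcd (s * p ^ j) e dvd s * p ^ (j - 1)" .
  moreover have "s * p ^ j \<noteq> 0"
    using assms(3) prime_gt_0_nat[OF assms(1)] by (cases "s = 0") auto
  ultimately show False
    using cong2_pow_gcd[OF assms(2,4)] cong2_pow_eq_1_dvd assms(3) by blast
qed

lemma cong2_geometric_sum:
  assumes "[(\<Sum>i<p. y ^ i) = 0] (mod u, v)"
  shows "[y ^ p = 1] (mod u, v)"
proof -
  have "[(y - 1) * (\<Sum>i<p. y ^ i) = (y - 1) * 0] (mod u, v)"
    using assms by (intro cong2_mult cong2_refl)
  then have "[y ^ p - 1 = 0] (mod u, v)"
    by (simp add: power_diff_1_eq)
  then show ?thesis
    by (simp add: cong2_def)
qed

lemma cong2_pow_pred_eq_1:
  assumes "[z ^ k = z] (mod u, v)" and "[z * z' = 1] (mod u, v)" and "k > 0"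
  shows "[z ^ (k - 1) = 1] (mod u, v)"
proof -
  have "z ^ (k - 1) = z ^ (k - 1) * 1"
    by simp
  also have "[\<dots> = z ^ (k - 1) * (z * z')] (mod u, v)"
    using assms(2) by (rule cong2_mult[OF cong2_refl cong2_sym])
  also have "z ^ (k - 1) * (z * z') = z ^ k * z'"
    using assms(3) by (metis mult.assoc power_minus_mult)
  also have "[\<dots> = z * z'] (mod u, v)"
    using assms(1) by (rule cong2_mult[OF _ cong2_refl])
  also have "[\<dots> = 1] (mod u, v)"
    by (rule assms(2))
  finally show ?thesis .
qed

lemma fermat_little_int:
  fixes a :: int
  assumes "prime q"
  shows "[a ^ q = a] (mod int q)"
proof -
  have "q > 0"
    using assms by (rule prime_gt_0_nat)
  have nat_case: "[x ^ q = x] (mod q)" for x :: nat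
  proof (cases "q dvd x")
    case True
    then have "[x ^ q = 0] (mod q)" and "[x = 0] (mod q)"
      using \<open>q > 0\<close> by (simp_all add: cong_0_iff dvd_power_iff_le dvd_trans[OF _ dvd_power])
    then show ?thesis
      by (metis cong_sym cong_trans)
  next
    case False
    then have "[x ^ (q - 1) * x = 1 * x] (mod q)"
      using fermat_theorem[OF assms] by (intro cong_mult cong_refl)
    moreover have "x ^ (q - 1) * x = x ^ q"
      using \<open>q > 0\<close> by (metis Suc_diff_1 power_Suc2)
    ultimately show ?thesis
      by simp
  qed
  define x where "x = nat (a mod int q)"
  have a_x: "[a = int x] (mod int q)"
    using \<open>q > 0\<close> by (simp add: x_def cong_def)
  then have "[a ^ q = int x ^ q] (mod int q)"
    by (rule cong_pow)
  also have "[int x ^ q = int x] (mod int q)"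
    using nat_case[of x] by (simp add: cong_int_iff flip: of_nat_power)
  also have "[int x = a] (mod int q)"
    using a_x by (rule cong_sym)
  finally show ?thesis .
qed

definition min_poly :: "int \<Rightarrow> int \<Rightarrow> int poly"
  where "min_poly t n = [:n, - t, 1:]"

context
  fixes t n :: int
begin

lemma cong2_linear_mult:
  "[[:a * c - n * (b * d), a * d + b * c + t * (b * d):] = [:a, b:] * [:c, d:]] (mod u, min_poly t n)"
  by (rule cong2I[of _ _ _ 0 _ "[:- (b * d):]"]) (simp add: min_poly_def algebra_simps)

lemma cong2_conj_mult_eq_1:
  assumes "[a\<^sup>2 + t * a * b + n * b\<^sup>2 = 1] (mod int q)"
  shows "[[:a, b:] * [:a + t * b, - b:] = 1] (mod of_nat q, min_poly t n)"
proof -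
  have "[[:a, b:] * [:a + t * b, - b:] = of_int (a\<^sup>2 + t * a * b + n * b\<^sup>2)] (mod of_nat q, min_poly t n)"
    by (rule cong2I[of _ _ _ 0 _ "[:- (b\<^sup>2):]"])
      (simp add: min_poly_def of_int_poly algebra_simps power2_eq_square)
  also have "[\<dots> = of_int 1] (mod of_nat q, min_poly t n)"
    using assms by (rule cong2_of_int)
  finally show ?thesis
    by simp
qed

lemma cong2_disc_sq:
  "[[:- t, 2:] ^ 2 = of_int (t\<^sup>2 - 4 * n)] (mod u, min_poly t n)"
  by (rule cong2I[of _ _ _ 0 _ "[:4:]"])
    (simp add: min_poly_def of_int_poly algebra_simps power2_eq_square)

(* Reducing the multiple of q modulo the monic min_poly leaves a multiple of min_poly of degree
   below 2, which must vanish. *)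
lemma cong2_of_int_0_imp_dvd:
  assumes "[of_int e = 0] (mod of_nat q, min_poly t n)"
  shows "int q dvd e"
proof -
  obtain A B where AB: "[:e:] = [:int q:] * A + min_poly t n * B"
    using assms by (auto simp: cong2_def of_int_poly of_nat_poly)
  obtain A1 A0 where div: "pseudo_divmod A (min_poly t n) = (A1, A0)"
    by (cases "pseudo_divmod A (min_poly t n)")
  have f: "min_poly t n \<noteq> 0" "degree (min_poly t n) = 2" "coeff (min_poly t n) 2 = 1"
    by (simp_all add: min_poly_def numeral_2_eq_2)
  have "A = min_poly t n * A1 + A0" and "A0 = 0 \<or> degree A0 < 2"
    using pseudo_divmod[OF f(1) div] f by simp_all
  define R where "R = [:e:] - [:int q:] * A0"
  have "R = min_poly t n * ([:int q:] * A1 + B)"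
    using AB \<open>A = _\<close> by (simp add: R_def algebra_simps)
  moreover have "degree R < 2"
    unfolding R_def using \<open>A0 = 0 \<or> degree A0 < 2\<close>
    by (auto intro: le_less_trans[OF degree_diff_le] simp: degree_mult_le)
  ultimately have "R = 0"
    using dvd_imp_degree_le[of "min_poly t n" R] f(2) by fastforce
  then have "[:e:] = smult (int q) A0"
    by (simp add: R_def)
  then have "e = int q * coeff A0 0"
    by (metis coeff_pCons_0 coeff_smult)
  then show ?thesis
    by simp
qed

lemma cong2_cyclotomic_root:
  assumes "prime p" and "prime q" and "q \<noteq> p"
    and "[(\<Sum>i<p. y ^ i) = 0] (mod of_nat q, min_poly t n)"
  shows "[y ^ p = 1] (mod of_nat q, min_poly t n)" and "\<not> [y = 1] (mod of_nat q, min_poly t n)"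
proof -
  show "[y ^ p = 1] (mod of_nat q, min_poly t n)"
    using assms(4) by (rule cong2_geometric_sum)
  show "\<not> [y = 1] (mod of_nat q, min_poly t n)"
  proof
    assume "[y = 1] (mod of_nat q, min_poly t n)"
    have "of_nat p = (\<Sum>i<p. 1 ^ i :: int poly)"
      by simp
    also have "[\<dots> = (\<Sum>i<p. y ^ i)] (mod of_nat q, min_poly t n)"
      using \<open>[y = 1] (mod _, _)\<close> by (rule cong2_sum[OF cong2_pow[OF cong2_sym]])
    also have "[\<dots> = 0] (mod of_nat q, min_poly t n)"
      by (rule assms(4))
    finally have "[of_int (int p) = 0] (mod of_nat q, min_poly t n)"
      by simp
    then have "int q dvd int p"
      by (rule cong2_of_int_0_imp_dvd)
    then show False
      using assms(1-3) primes_dvd_imp_eq by auto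
  qed
qed

lemma cong2_disc_pow_prime:
  assumes "prime q" and "odd q"
  shows "[[:- t, 2:] ^ q = of_int (Legendre (t\<^sup>2 - 4 * n) (int q)) * [:- t, 2:]]
           (mod of_nat q, min_poly t n)"
proof -
  define s where "s = [:- t, 2:]"
  define \<Delta> where "\<Delta> = t\<^sup>2 - 4 * n"
  obtain h where q: "q = 2 * h + 1"
    using assms(2) by (rule oddE)
  have "2 < q"
    using assms prime_ge_2_nat[of q] by (cases "q = 2") auto
  then have "[Legendre \<Delta> (int q) = \<Delta> ^ h] (mod int q)"
    using euler_criterion[of q \<Delta>] assms(1) q by simp
  have "s ^ q = s * (s ^ 2) ^ h"
    by (simp add: q power_mult)
  also have "[\<dots> = s * of_int \<Delta> ^ h] (mod of_nat q, min_poly t n)"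
    unfolding s_def \<Delta>_def by (intro cong2_mult cong2_refl cong2_pow cong2_disc_sq)
  also have "s * of_int \<Delta> ^ h = s * of_int (\<Delta> ^ h)"
    by simp
  also have "[\<dots> = s * of_int (Legendre \<Delta> (int q))] (mod of_nat q, min_poly t n)"
    using cong2_of_int[OF cong_sym[OF \<open>[Legendre \<Delta> (int q) = \<Delta> ^ h] (mod int q)\<close>]]
    by (rule cong2_mult[OF cong2_refl])
  finally show ?thesis
    by (simp add: s_def \<Delta>_def mult.commute)
qed

(* 2z = (2a + tb) + b s with s = 2X - t, a square root of the discriminant. *)
lemma cong2_two_pow_prime:
  assumes "prime q" and "odd q"
  shows "[2 * [:a, b:] ^ q = of_int (2 * a + t * b)
            + of_int (b * Legendre (t\<^sup>2 - 4 * n) (int q)) * [:- t, 2:]] (mod of_nat q, min_poly t n)"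
proof -
  define s where "s = [:- t, 2:]"
  define L where "L = Legendre (t\<^sup>2 - 4 * n) (int q)"
  have "[2 = of_int (2 ^ q)] (mod of_nat q, min_poly t n)"
    using cong2_of_int[OF cong_sym[OF fermat_little_int[OF assms(1), of 2]]] by simp
  then have "[2 * [:a, b:] ^ q = of_int (2 ^ q) * [:a, b:] ^ q] (mod of_nat q, min_poly t n)"
    by (rule cong2_mult[OF _ cong2_refl])
  also have "of_int (2 ^ q) * [:a, b:] ^ q = (2 * [:a, b:]) ^ q"
    by (simp only: power_mult_distrib of_int_power of_int_numeral)
  also have "\<dots> = (of_int (2 * a + t * b) + of_int b * s) ^ q"
    by (simp add: s_def of_int_poly numeral_poly mult.commute)
  also have "[\<dots> = of_int (2 * a + t * b) ^ q + (of_int b * s) ^ q] (mod of_nat q, min_poly t n)"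
    using assms(1) by (rule cong2_frobenius)
  also have "\<dots> = of_int ((2 * a + t * b) ^ q) + of_int (b ^ q) * s ^ q"
    by (simp add: power_mult_distrib)
  also have "[\<dots> = of_int (2 * a + t * b) + of_int b * (of_int L * s)] (mod of_nat q, min_poly t n)"
    unfolding s_def L_def using assms
    by (intro cong2_add cong2_mult cong2_of_int fermat_little_int cong2_disc_pow_prime)
  finally show ?thesis
    by (simp only: s_def L_def of_int_mult mult.assoc)
qed

lemma cong2_pow_double_prime_eq_1:
  assumes "odd q" and norm: "[a\<^sup>2 + t * a * b + n * b\<^sup>2 = 1] (mod int q)"
    and disc: "[t\<^sup>2 - 4 * n = 0] (mod int q)"
    and frob: "[2 * [:a, b:] ^ q = of_int (2 * a + t * b)] (mod of_nat q, min_poly t n)"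
  shows "[[:a, b:] ^ (2 * q) = 1] (mod of_nat q, min_poly t n)"
proof -
  have "(2 * a + t * b)\<^sup>2 = 4 * (a\<^sup>2 + t * a * b + n * b\<^sup>2) + b\<^sup>2 * (t\<^sup>2 - 4 * n)"
    by (simp add: algebra_simps power2_eq_square)
  also have "[\<dots> = 4 * 1 + b\<^sup>2 * 0] (mod int q)"
    using norm disc by (intro cong_add cong_mult cong_refl)
  finally have c_sq: "[(2 * a + t * b)\<^sup>2 = 4] (mod int q)"
    by simp
  have "of_int 4 * [:a, b:] ^ (2 * q) = (2 * [:a, b:] ^ q) ^ 2"
    by (simp add: power_mult_distrib power_mult mult.commute)
  also have "[\<dots> = of_int (2 * a + t * b) ^ 2] (mod of_nat q, min_poly t n)"
    using frob by (rule cong2_pow)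
  also have "of_int (2 * a + t * b) ^ 2 = of_int ((2 * a + t * b)\<^sup>2)"
    by simp
  also have "[\<dots> = of_int 4 * 1] (mod of_nat q, min_poly t n)"
    using cong2_of_int[OF c_sq] by simp
  finally have "[of_int 4 * [:a, b:] ^ (2 * q) = of_int 4 * 1] (mod of_nat q, min_poly t n)" .
  moreover have "coprime 4 (int q)"
    using assms(1) coprime_power_left_iff[of 2 2 "int q"] by simp
  ultimately show ?thesis
    using cong2_mult_cancel_of_int by blast
qed

(* The three cases correspond to the Legendre symbol of the discriminant being 1, -1 and 0. *)
lemma cong2_pow_prime_trichotomy:
  assumes "prime q" and "odd q" and norm: "[a\<^sup>2 + t * a * b + n * b\<^sup>2 = 1] (mod int q)"
  shows "[[:a, b:] ^ q = [:a, b:]] (mod of_nat q, min_poly t n)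
       \<or> [[:a, b:] ^ q = [:a + t * b, - b:]] (mod of_nat q, min_poly t n)
       \<or> [[:a, b:] ^ (2 * q) = 1] (mod of_nat q, min_poly t n)"
proof -
  define s where "s = [:- t, 2:]"
  define c where "c = 2 * a + t * b"
  define L where "L = Legendre (t\<^sup>2 - 4 * n) (int q)"
  have frob: "[of_int 2 * [:a, b:] ^ q = of_int c + of_int (b * L) * s] (mod of_nat q, min_poly t n)"
    using cong2_two_pow_prime[OF assms(1,2), of a b] by (simp add: s_def c_def L_def)
  have "coprime 2 (int q)"
    using assms(2) by simp
  note cancel_2 = cong2_mult_cancel_of_int[OF this]
  have "L = 1 \<or> L = -1 \<or> L = 0 \<and> [t\<^sup>2 - 4 * n = 0] (mod int q)"
    by (simp add: L_def Legendre_def)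
  then consider "L = 1" | "L = -1" | "L = 0" "[t\<^sup>2 - 4 * n = 0] (mod int q)"
    by blast
  then show ?thesis
  proof cases
    case 1
    then have "of_int c + of_int (b * L) * s = of_int 2 * [:a, b:]"
      by (simp add: c_def s_def of_int_poly)
    then show ?thesis
      using frob cancel_2 by (metis (no_types))
  next
    case 2
    then have "of_int c + of_int (b * L) * s = of_int 2 * [:a + t * b, - b:]"
      by (simp add: c_def s_def of_int_poly)
    then show ?thesis
      using frob cancel_2 by (metis (no_types))
  next
    case 3
    then show ?thesis
      using cong2_pow_double_prime_eq_1[OF assms(2) norm 3(2)] frob by (simp add: c_def)
  qed
qed

lemma cong2_norm_1_pow_eq_1:
  assumes "prime q" and "odd q" and norm: "[a\<^sup>2 + t * a * b + n * b\<^sup>2 = 1] (mod int q)"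
  shows "\<exists>e\<in>{q - 1, q + 1, 2 * q}. [[:a, b:] ^ e = 1] (mod of_nat q, min_poly t n)"
proof -
  define z where "z = [:a, b:]"
  define z' where "z' = [:a + t * b, - b:]"
  have "[z * z' = 1] (mod of_nat q, min_poly t n)"
    unfolding z_def z'_def using norm by (rule cong2_conj_mult_eq_1)
  have "q > 0"
    using assms(1) by (rule prime_gt_0_nat)
  from cong2_pow_prime_trichotomy[OF assms, folded z_def z'_def]
  consider "[z ^ q = z] (mod of_nat q, min_poly t n)" | "[z ^ q = z'] (mod of_nat q, min_poly t n)"
    | "[z ^ (2 * q) = 1] (mod of_nat q, min_poly t n)"
    by blast
  then show ?thesis
  proof cases
    case 1
    then show ?thesis
      using cong2_pow_pred_eq_1[OF 1 \<open>[z * z' = 1] (mod _, _)\<close> \<open>q > 0\<close>] unfolding z_def by blast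
  next
    case 2
    have "z ^ (q + 1) = z ^ q * z"
      by simp
    also have "[\<dots> = z' * z] (mod of_nat q, min_poly t n)"
      using 2 by (rule cong2_mult[OF _ cong2_refl])
    also have "[\<dots> = 1] (mod of_nat q, min_poly t n)"
      using \<open>[z * z' = 1] (mod _, _)\<close> by (simp add: mult.commute)
    finally show ?thesis
      unfolding z_def by blast
  next
    case 3
    then show ?thesis
      unfolding z_def by blast
  qed
qed

end

lemma cong2_mod_coeffs: "[[:x mod N, y mod N:] = [:x, y:]] (mod of_int N, v)"
  by (rule cong2I[of _ _ _ "[:- (x div N), - (y div N):]" _ 0])
    (simp add: of_int_poly algebra_simps minus_div_mult_eq_mod[symmetric])

(* Trace and norm of the generator sqrt D resp. omega of Z[sqrt D] resp. Z[omega]; its minimal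
   polynomial X^2 - tX + n is min_poly t n. *)
definition gen_trace :: "int \<Rightarrow> int"
  where "gen_trace D = (if D mod 4 = 1 then 1 else 0)"

definition gen_norm :: "int \<Rightarrow> int"
  where "gen_norm D = (if D mod 4 = 1 then (1 - D) div 4 else - D)"

abbreviation gen_min_poly :: "int \<Rightarrow> int poly"
  where "gen_min_poly D \<equiv> min_poly (gen_trace D) (gen_norm D)"

definition to_poly :: "int \<times> int \<Rightarrow> int poly"
  where "to_poly x = [:fst x, snd x:]"

lemma qnorm_eq: "qnorm D (a, b) = a\<^sup>2 + gen_trace D * a * b + gen_norm D * b\<^sup>2"
  by (simp add: qnorm_def gen_trace_def gen_norm_def)

lemma to_poly_qmul: "[to_poly (qmul N D x y) = to_poly x * to_poly y] (mod of_int N, gen_min_poly D)"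
proof -
  obtain a b c d where xy: "x = (a, b)" "y = (c, d)"
    by fastforce
  have "D mod 4 = 1 \<Longrightarrow> (D - 1) div 4 = - ((1 - D) div 4)"
    by presburger
  then have "qmul N D x y = ((a * c - gen_norm D * (b * d)) mod N, (a * d + b * c + gen_trace D * (b * d)) mod N)"
    by (simp add: xy qmul_def gen_norm_def gen_trace_def algebra_simps)
  then show ?thesis
    using cong2_trans[OF cong2_mod_coeffs cong2_linear_mult] by (simp add: to_poly_def xy)
qed

lemma to_poly_qpow: "[to_poly (qpow N D x k) = to_poly x ^ k] (mod of_int N, gen_min_poly D)"
proof (induction k)
  case 0
  show ?case
    using cong2_mod_coeffs[where x = 1 and y = 0] by (simp add: qpow_def qone_def to_poly_def one_pCons)
next
  case (Suc k)
  have "qpow N D x (Suc k) = qmul N D x (qpow N D x k)"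
    by (simp add: qpow_def)
  then show ?case
    using cong2_trans[OF to_poly_qmul cong2_mult[OF cong2_refl Suc.IH]] by simp
qed

lemma to_poly_cyclo_prime_eval:
  "[to_poly (cyclo_prime_eval N D p x) = (\<Sum>i<p. to_poly x ^ i)] (mod of_int N, gen_min_poly D)"
proof -
  have "[to_poly (foldr (\<lambda>i acc. qadd N (qpow N D x i) acc) is qzero) = (\<Sum>i\<leftarrow>is. to_poly x ^ i)]
          (mod of_int N, gen_min_poly D)" for "is"
  proof (induction "is")
    case Nil
    then show ?case
      by (simp add: to_poly_def qzero_def)
  next
    case (Cons i "is")
    have "to_poly (qadd N u u') = [:(fst u + fst u') mod N, (snd u + snd u') mod N:]" for u u'
      by (simp add: to_poly_def qadd_def)
    then have "[to_poly (qadd N u u') = to_poly u + to_poly u'] (mod of_int N, gen_min_poly D)" for u u'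
      using cong2_mod_coeffs by (simp add: to_poly_def)
    then show ?case
      using cong2_trans[OF _ cong2_add[OF to_poly_qpow Cons.IH]] by simp
  qed
  from this[of "[0..<p]"] show ?thesis
    by (simp add: cyclo_prime_eval_def sum_list_distinct_conv_sum_set atLeast0LessThan)
qed

lemma cyclo_prime_eval_qpow_cong2:
  assumes "cyclo_prime_eval N D p (qpow N D w m) = qzero"
  shows "[(\<Sum>i<p. (to_poly w ^ m) ^ i) = 0] (mod of_int N, gen_min_poly D)"
proof -
  have "[(\<Sum>i<p. (to_poly w ^ m) ^ i) = (\<Sum>i<p. to_poly (qpow N D w m) ^ i)] (mod of_int N, gen_min_poly D)"
    by (rule cong2_sum, rule cong2_pow, rule cong2_sym, rule to_poly_qpow)
  also have "[\<dots> = to_poly (cyclo_prime_eval N D p (qpow N D w m))] (mod of_int N, gen_min_poly D)"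
    by (rule cong2_sym[OF to_poly_cyclo_prime_eval])
  also have "to_poly (cyclo_prime_eval N D p (qpow N D w m)) = 0"
    by (simp add: assms to_poly_def qzero_def)
  finally show ?thesis .
qed

lemma cyclo_prime_eval_order:
  fixes N :: int and p q s j :: nat
  assumes "prime p" and "prime q" and "q \<noteq> p" and "int q dvd N" and "1 \<le> j"
    and "cyclo_prime_eval N D p (qpow N D w (s * p ^ (j - 1))) = qzero"
  shows "[to_poly w ^ (s * p ^ j) = 1] (mod of_nat q, gen_min_poly D)"
    and "\<not> [to_poly w ^ (s * p ^ (j - 1)) = 1] (mod of_nat q, gen_min_poly D)"
proof -
  have "(of_nat q :: int poly) dvd of_int N"
    using assms(4) by (metis dvdE dvd_triv_left of_int_mult of_int_of_nat_eq)
  with cyclo_prime_eval_qpow_cong2[OF assms(6)]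
  have root: "[(\<Sum>i<p. (to_poly w ^ (s * p ^ (j - 1))) ^ i) = 0] (mod of_nat q, gen_min_poly D)"
    by (rule cong2_dvd_modulus)
  have "s * p ^ (j - 1) * p = s * p ^ j"
    using assms(5) by (cases j) simp_all
  then show "[to_poly w ^ (s * p ^ j) = 1] (mod of_nat q, gen_min_poly D)"
    using cong2_cyclotomic_root(1)[OF assms(1-3) root] by (metis power_mult)
  show "\<not> [to_poly w ^ (s * p ^ (j - 1)) = 1] (mod of_nat q, gen_min_poly D)"
    using cong2_cyclotomic_root(2)[OF assms(1-3) root] .
qed

lemma odd_prime_power_not_dvd_double:
  fixes p q j :: nat
  assumes "prime p" and "odd p" and "prime q" and "q \<noteq> p" and "1 \<le> j"
  shows "\<not> p ^ j dvd 2 * q"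
proof
  assume "p ^ j dvd 2 * q"
  moreover have "p dvd p ^ j"
    using assms(5) by (simp add: dvd_power)
  ultimately have "p dvd 2 \<or> p dvd q"
    using assms(1) prime_dvd_mult_iff dvd_trans by blast
  moreover have "p \<noteq> 2"
    using assms(2) by auto
  ultimately show False
    using primes_dvd_imp_eq[OF assms(1) two_is_prime_nat] primes_dvd_imp_eq[OF assms(1,3)] assms(4)
    by blast
qed

lemma prime_factor_cong_pm1:
  fixes N D :: int and p q s j :: nat
  assumes p: "prime p" "odd p" and N: "odd N" "[N = -1] (mod int (p ^ j))"
    and q: "prime q" "int q dvd N"
    and "w \<in> G N D" and "1 \<le> j"
    and cyclo: "cyclo_prime_eval N D p (qpow N D w (s * p ^ (j - 1))) = qzero"
  shows "\<exists>\<epsilon>\<in>{1, -1}. [int q = \<epsilon>] (mod int (p ^ j))"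
proof -
  have "odd q"
    using q(2) N(1) by (auto elim: oddE)
  have "q \<noteq> p"
  proof
    assume "q = p"
    with q(2) have "[N = 0] (mod int p)"
      by (simp add: cong_0_iff)
    moreover have "[N = -1] (mod int p)"
      using N(2) by (rule cong_dvd_modulus) (use \<open>1 \<le> j\<close> in \<open>simp add: dvd_power\<close>)
    ultimately have "int p dvd 1"
      by (metis cong_def cong_iff_dvd_diff diff_0 dvd_minus_iff)
    then show False
      using p(1) by simp
  qed
  obtain a b where w: "w = (a, b)"
    by fastforce
  have "[qnorm D (a, b) = 1] (mod int q)"
    using \<open>w \<in> G N D\<close> q(2) by (auto simp: G_def w intro: cong_dvd_modulus)
  then obtain e where e: "e \<in> {q - 1, q + 1, 2 * q}" "[to_poly w ^ e = 1] (mod of_nat q, gen_min_poly D)"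
    using cong2_norm_1_pow_eq_1[OF q(1) \<open>odd q\<close>] by (force simp: qnorm_eq to_poly_def w)
  have "p ^ j dvd e"
    using cyclo_prime_eval_order[OF p(1) q(1) \<open>q \<noteq> p\<close> q(2) \<open>1 \<le> j\<close> cyclo] e(2)
    by (rule cong2_prime_power_dvd_exponent[OF p(1)])
  with e(1) odd_prime_power_not_dvd_double[OF p q(1) \<open>q \<noteq> p\<close> \<open>1 \<le> j\<close>]
  have "p ^ j dvd q - 1 \<or> p ^ j dvd q + 1"
    by auto
  moreover have "int (q - 1) = int q - 1"
    using prime_gt_0_nat[OF q(1)] by simp
  ultimately show ?thesis
    unfolding cong_iff_dvd_diff by (auto simp: add.commute simp flip: int_dvd_int_iff)
qed

lemma cong_pm1_mult:
  fixes x y m :: int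
  assumes "\<exists>\<epsilon>\<in>{1, -1}. [x = \<epsilon>] (mod m)" and "\<exists>\<epsilon>\<in>{1, -1}. [y = \<epsilon>] (mod m)"
  shows "\<exists>\<epsilon>\<in>{1, -1}. [x * y = \<epsilon>] (mod m)"
proof -
  obtain \<epsilon> \<delta> where "\<epsilon> \<in> {1, -1}" "\<delta> \<in> {1, -1}" "[x = \<epsilon>] (mod m)" "[y = \<delta>] (mod m)"
    using assms by blast
  then have "\<epsilon> * \<delta> \<in> {1, -1}" and "[x * y = \<epsilon> * \<delta>] (mod m)"
    by (auto intro: cong_mult)
  then show ?thesis
    by blast
qed

lemma divisor_cong_pm1:
  fixes n d :: nat and m :: int
  assumes "\<And>q. prime q \<Longrightarrow> q dvd n \<Longrightarrow> \<exists>\<epsilon>\<in>{1, -1}. [int q = \<epsilon>] (mod m)"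
    and "n \<noteq> 0" and "d dvd n"
  shows "\<exists>\<epsilon>\<in>{1, -1}. [int d = \<epsilon>] (mod m)"
  using assms(3)
proof (induction d rule: prime_divisors_induct)
  case zero
  then show ?case
    using assms(2) by simp
next
  case (unit d)
  then show ?case
    by simp
next
  case (factor q d)
  then have "q dvd n" and "d dvd n"
    by (auto intro: dvd_mult_left dvd_mult_right)
  then show ?case
    using assms(1) factor cong_pm1_mult[of "int q" m "int d"] by simp
qed

lemma cong_1_mult_cong_minus_1_gt_square:
  fixes a b m :: int
  assumes "odd m" and "m > 0" and "a > 1" and "b > 1" and "odd b"
    and "[a = 1] (mod m)" and "[b = -1] (mod m)"
  shows "m\<^sup>2 < a * b"
proof -
  obtain x where x: "a - 1 = m * x"
    using assms(6) unfolding cong_iff_dvd_diff ..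
  obtain y where y: "b + 1 = m * y"
    using assms(7) unfolding cong_iff_dvd_diff by auto
  have "m * x > 0" and "m * y > 0"
    using x y assms(3,4) by linarith+
  then have "x > 0" and "y > 0"
    using assms(2) by (simp_all add: zero_less_mult_iff)
  have "y \<noteq> 1"
    using y assms(1,5) by auto
  have "m * 1 \<le> m * x"
    using \<open>x > 0\<close> assms(2) by (intro mult_left_mono) auto
  then have a_ge: "m + 1 \<le> a"
    using x by linarith
  have "m * 2 \<le> m * y"
    using \<open>y > 0\<close> \<open>y \<noteq> 1\<close> assms(2) by (intro mult_left_mono) auto
  then have b_ge: "2 * m - 1 \<le> b"
    using y by linarith
  have "(m + 1) * (2 * m - 1) \<le> a * b"
    using a_ge b_ge assms(2) by (intro mult_mono) auto
  moreover have "m * 1 \<le> m * m"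
    using assms(2) by (intro mult_left_mono) auto
  moreover have "(m + 1) * (2 * m - 1) = m\<^sup>2 + (m * m + m - 1)"
    by (simp add: power2_eq_square algebra_simps)
  ultimately show ?thesis
    using assms(2) by linarith
qed

lemma composite_cong_pm1_gt_square:
  fixes a b m :: int
  assumes "odd m" and "m > 1" and "a > 1" and "b > 1" and "odd (a * b)"
    and "[a * b = -1] (mod m)"
    and "\<exists>\<epsilon>\<in>{1, -1}. [a = \<epsilon>] (mod m)" and "\<exists>\<epsilon>\<in>{1, -1}. [b = \<epsilon>] (mod m)"
  shows "m\<^sup>2 < a * b"
proof -
  have "\<not> [1 = -1] (mod m)"
  proof
    assume "[1 = -1] (mod m)"
    then have "m dvd 2"
      by (simp add: cong_iff_dvd_diff)
    then show False
      using assms(1,2) zdvd_imp_le[of m 2] by (cases "m = 2") auto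
  qed
  then have "\<not> [a * b = 1] (mod m)"
    using assms(6) by (metis cong_sym cong_trans)
  then consider "[a = 1] (mod m)" "[b = -1] (mod m)" | "[a = -1] (mod m)" "[b = 1] (mod m)"
    using assms(7,8) cong_mult[of a 1 m b 1] cong_mult[of a "-1" m b "-1"] by auto
  then show ?thesis
  proof cases
    case 1
    then show ?thesis
      using assms cong_1_mult_cong_minus_1_gt_square[of m a b] by simp
  next
    case 2
    then show ?thesis
      using assms cong_1_mult_cong_minus_1_gt_square[of m b a] by (simp add: mult.commute)
  qed
qed

lemma pm1_prime_factors_composite_gt_square:
  fixes n m :: nat
  assumes "odd m" and "1 < m" and "1 < n" and "odd n" and "\<not> prime n"
    and "[int n = -1] (mod int m)"
    and "\<And>q. prime q \<Longrightarrow> q dvd n \<Longrightarrow> \<exists>\<epsilon>\<in>{1, -1}. [int q = \<epsilon>] (mod int m)"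
  shows "m\<^sup>2 < n"
proof -
  obtain a where a: "a dvd n" "a \<noteq> 1" "a \<noteq> n"
    using assms(3,5) by (auto simp: prime_nat_iff)
  obtain b where ab: "n = a * b"
    using a(1) by (rule dvdE)
  then have "1 < a" and "1 < b"
    using a assms(3) by (auto simp: nat_neq_iff)
  have "n \<noteq> 0"
    using assms(3) by simp
  have "\<exists>\<epsilon>\<in>{1, -1}. [int d = \<epsilon>] (mod int m)" if "d dvd n" for d
    using assms(7) \<open>n \<noteq> 0\<close> that by (rule divisor_cong_pm1)
  then have "(int m)\<^sup>2 < int a * int b"
    using ab \<open>1 < a\<close> \<open>1 < b\<close> assms(1,2,4,6)
    by (intro composite_cong_pm1_gt_square) auto
  then show ?thesis
    using ab by (simp flip: of_nat_mult of_nat_power)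
qed

lemma log_le_imp_mult_power_le:
  fixes p x l k :: nat
  assumes "p > 1" and "x > 0" and "log (real p) (real x) + real l \<le> real k"
  shows "x * p ^ l \<le> p ^ k"
proof -
  have "real x * real p ^ l = real p powr (log (real p) (real x) + real l)"
    using assms(1,2) by (simp add: powr_add powr_realpow)
  also have "\<dots> \<le> real p powr real k"
    using assms(1,3) by (intro powr_mono) auto
  also have "\<dots> = real p ^ k"
    using assms(1) by (simp add: powr_realpow)
  finally show ?thesis
    by (simp flip: of_nat_power of_nat_mult)
qed

theorem theorem1p2:
  fixes D N :: int and p k l c j :: nat and w :: "int \<times> int"
  assumes "squarefree D"
    and "prime p" and "odd p"
    and "k > 0" and "l > 0" and "c > 0"
    and "coprime (c * k) p"
    and "N = int (c * k * p ^ l) - 1"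
    and "odd N"
    and "jacobi D (nat N) = -1"
    and "w \<in> G N D"
    and "1 \<le> j" and "j \<le> l"
    and "cyclo_prime_eval N D p (qpow N D w (c * k * p ^ (j - 1))) = qzero"
    and "2 * real j \<ge> log (real p) (real (c * k)) + real l"
  shows "prime N"
proof (rule ccontr)
  assume "\<not> prime N"
  define M where "M = c * k * p ^ l"
  define P where "P = p ^ j"
  have N_M: "N = int M - 1"
    unfolding M_def by (rule assms(8))
  have "2 < p"
    using assms(2,3) prime_ge_2_nat[of p] by (cases "p = 2") auto
  then have "1 < P" and "odd P"
    using assms(3,12) one_less_power[of p j] by (simp_all add: P_def)
  have "P dvd M"
    using assms(13) by (simp add: M_def P_def le_imp_power_dvd)
  then have N_cong: "[N = -1] (mod int P)"
    using N_M by (simp add: cong_iff_dvd_diff)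
  have "M \<le> P\<^sup>2"
    using log_le_imp_mult_power_le[of p "c * k" l "2 * j"] assms(4,6,15) \<open>2 < p\<close>
    by (simp add: M_def P_def mult.commute flip: power_mult)
  moreover have "p \<le> M"
    using assms(4-6) \<open>2 < p\<close> by (simp add: M_def dvd_imp_le)
  ultimately obtain n where N: "N = int n" and "1 < n" and "n < P\<^sup>2"
    using N_M \<open>2 < p\<close> by (intro that[of "M - 1"]) auto
  have "\<exists>\<epsilon>\<in>{1, -1}. [int q = \<epsilon>] (mod int P)" if "prime q" "q dvd n" for q
    using prime_factor_cong_pm1[OF assms(2,3,9) _ that(1) _ assms(11,12,14)] N_cong that(2) N
    by (simp add: P_def)
  then have "P\<^sup>2 < n"
    using \<open>odd P\<close> \<open>1 < P\<close> \<open>1 < n\<close> \<open>\<not> prime N\<close> N_cong assms(9)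
    by (intro pm1_prime_factors_composite_gt_square) (auto simp: N)
  with \<open>n < P\<^sup>2\<close> show False
    by simp
qed

end
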